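(* Let $n,m,d\ge 1$. For each $i\in\{1,\dots,n\}$ let $\mathcal{B}_i\in\mathbb{R}^{l_i\times m}$, $Z_i\in\mathbb{R}^{k_i\times l_i}$ and $\mu_i\ge 0$ be such that $M_i=\mathcal{B}_i\mathcal{B}_i^{\top}+\mu_i Z_i^{\top}Z_i$ is invertible. Define $Q_i=\mathcal{B}_i^{\top}M_i^{-1}\mathcal{B}_i\in\mathbb{R}^{m\times m}$, $\mathcal{Q}_{II}=\sum_{i=1}^n Q_i$ and $\mathcal{P}_{II}=\sum_{i=1}^n(I_m-Q_i)=nI_m-\mathcal{Q}_{II}$, and let $\mathbf{1}\in\mathbb{R}^m$ be the all-ones vector. Then the following statements are equivalent: (a) $\mathcal{P}_{II}\mathbf{1}=0$; (b) $\mathcal{Q}_{II}\mathbf{1}=n\mathbf{1}$; (c) $Q_i\mathbf{1}=\mathbf{1}$ for every $i\in\{1,\dots,n\}$; (d) the function $S\mapsto\mathrm{tr}(S\mathcal{P}_{II}S^{\top})$ on $\mathbb{R}^{d\times m}$ is invariant to translations, i.e. $\mathrm{tr}\big((S+t\mathbf{1}^{\top})\mathcal{P}_{II}(S+t\mathbf{1}^{\top})^{\top}\big)=\mathrm{tr}(S\mathcal{P}_{II}S^{\top})$ for all $S\in\mathbb{R}^{d\times m}$ and all $t\in\mathbb{R}^d$; (e) for every $i\in\{1,\dots,n\}$ there exists $x_i\in\mathbb{R}^{l_i}$ with $\mathcal{B}_i^{\top}x_i=\mathbf{1}$ and, if $\mu_i>0$, additionally $Z_ix_i=0$.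
   Context: In the paper, $\mathcal{B}_i=\mathcal{B}_i(D_i)$ is the matrix obtained by applying a feature map $\beta_i:\mathbb{R}^d\to\mathbb{R}^{l_i}$ to each column (point) of a datum shape $D_i\in\mathbb{R}^{d\times m}$, $Z_i$ is a regularization matrix and $\mu_i$ a smoothing weight of a linear basis warp $p\mapsto W^{\top}\beta_i(p)$; for the statement only the matrices themselves matter. *)

theory Defs
  imports "Jordan_Normal_Form.Matrix"
begin

definition mtrace :: "'a :: comm_ring_1 mat \<Rightarrow> 'a" where
  "mtrace A = (\<Sum>i<dim_row A. A $$ (i, i))"

definition minv :: "'a :: comm_ring_1 mat \<Rightarrow> 'a mat" where
  "minv A = (SOME B. B \<in> carrier_mat (dim_row A) (dim_row A) \<and> inverts_mat A B \<and> inverts_mat B A)"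

definition ones_vec :: "nat \<Rightarrow> 'a :: {zero,one} vec" where
  "ones_vec m = vec m (\<lambda>_. 1)"

definition outer_prod :: "'a :: semiring_1 vec \<Rightarrow> 'a vec \<Rightarrow> 'a mat" where
  "outer_prod t s = mat (dim_vec t) (dim_vec s) (\<lambda>(r, c). t $ r * s $ c)"

definition Mmat :: "real mat \<Rightarrow> real mat \<Rightarrow> real \<Rightarrow> real mat" where
  "Mmat B Z \<mu> = B * B\<^sup>T + \<mu> \<cdot>\<^sub>m (Z\<^sup>T * Z)"

definition Qmat :: "real mat \<Rightarrow> real mat \<Rightarrow> real \<Rightarrow> real mat" where
  "Qmat B Z \<mu> = B\<^sup>T * minv (Mmat B Z \<mu>) * B"

definition QII :: "nat \<Rightarrow> nat \<Rightarrow> (nat \<Rightarrow> real mat) \<Rightarrow> (nat \<Rightarrow> real mat) \<Rightarrow> (nat \<Rightarrow> real) \<Rightarrow> real mat" where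
  "QII n m B Z \<mu> = mat m m (\<lambda>(r, c). \<Sum>i=1..n. Qmat (B i) (Z i) (\<mu> i) $$ (r, c))"

definition PII :: "nat \<Rightarrow> nat \<Rightarrow> (nat \<Rightarrow> real mat) \<Rightarrow> (nat \<Rightarrow> real mat) \<Rightarrow> (nat \<Rightarrow> real) \<Rightarrow> real mat" where
  "PII n m B Z \<mu> = mat m m (\<lambda>(r, c). \<Sum>i=1..n. (1\<^sub>m m - Qmat (B i) (Z i) (\<mu> i)) $$ (r, c))"

end

theory Submission
  imports Defs
begin

(* For w = M^-1 B v the normal equations M w = B v give
     v.v - v.(Q v) = |v - B^T w|^2 + mu |Z w|^2,
   so each Q_i satisfies v.(Q_i v) <= v.v, with equality iff Q_i v = v iff v = B_i^T x with
   mu_i Z_i x = 0 for some x (necessarily x = w).  Summing, 1.(P 1) = sum_i (1.1 - 1.(Q_i 1)) is a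
   sum of nonnegative terms, which links (a), (b), (c) and (e).  As P is symmetric, translating S
   changes tr(S P S^T) only by terms in P 1, which vanish under (a); conversely S = 0, t = 1
   turns translation invariance into d * 1.(P 1) = 0. *)

lemma transpose_smult_mat: "(c \<cdot>\<^sub>m A)\<^sup>T = c \<cdot>\<^sub>m A\<^sup>T"
  by (rule eq_matI) auto

lemma smult_mat_mult_vec:
  fixes A :: "'a::comm_ring_1 mat"
  assumes "A \<in> carrier_mat nr nc" and "v \<in> carrier_vec nc"
  shows "(c \<cdot>\<^sub>m A) *\<^sub>v v = c \<cdot>\<^sub>v (A *\<^sub>v v)"
  using assms by (intro eq_vecI) (auto simp: scalar_prod_def sum_distrib_left ac_simps)

lemma scalar_prod_self_nonneg: "0 \<le> (v::real vec) \<bullet> v"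
  using conjugate_square_ge_0_vec[of v] by simp

lemma scalar_prod_self_eq_0_iff: "(v::real vec) \<in> carrier_vec n \<Longrightarrow> v \<bullet> v = 0 \<longleftrightarrow> v = 0\<^sub>v n"
  using conjugate_square_eq_0_vec[of v n] by simp

lemma scalar_prod_diff_self:
  fixes v y :: "'a::comm_ring_1 vec"
  assumes "v \<in> carrier_vec n" and "y \<in> carrier_vec n"
  shows "(v - y) \<bullet> (v - y) = v \<bullet> v - 2 * (v \<bullet> y) + y \<bullet> y"
  using assms
  by (simp add: scalar_prod_def sum_subtractf sum.distrib sum_distrib_left algebra_simps mult_2)

lemma diff_eq_0_vec_iff:
  fixes v y :: "'a::ab_group_add vec"
  assumes "v \<in> carrier_vec n" and "y \<in> carrier_vec n"
  shows "v - y = 0\<^sub>v n \<longleftrightarrow> v = y"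
proof
  assume "v - y = 0\<^sub>v n"
  then show "v = y" using assms by (intro eq_vecI) (auto simp: vec_eq_iff)
qed (use assms in simp)

lemma mat_sum_mult_vec:
  assumes F: "\<And>i. i \<in> I \<Longrightarrow> F i \<in> carrier_mat nr nc" and v: "v \<in> carrier_vec nc"
  shows "mat nr nc (\<lambda>(r, c). \<Sum>i\<in>I. F i $$ (r, c)) *\<^sub>v v = vec nr (\<lambda>r. \<Sum>i\<in>I. (F i *\<^sub>v v) $ r)"
proof (rule eq_vecI)
  fix r assume "r < dim_vec (vec nr (\<lambda>r. \<Sum>i\<in>I. (F i *\<^sub>v v) $ r))"
  then have r: "r < nr" by simp
  have "(mat nr nc (\<lambda>(r, c). \<Sum>i\<in>I. F i $$ (r, c)) *\<^sub>v v) $ r = (\<Sum>c<nc. \<Sum>i\<in>I. F i $$ (r, c) * v $ c)"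
    using r v by (simp add: scalar_prod_def sum_distrib_right lessThan_atLeast0)
  also have "\<dots> = (\<Sum>i\<in>I. (F i *\<^sub>v v) $ r)"
  proof (subst sum.swap, rule sum.cong)
    fix i assume "i \<in> I"
    then have "F i \<in> carrier_mat nr nc" by (rule F)
    then show "(\<Sum>c<nc. F i $$ (r, c) * v $ c) = (F i *\<^sub>v v) $ r"
      using r v by (simp add: scalar_prod_def lessThan_atLeast0)
  qed simp
  finally show "(mat nr nc (\<lambda>(r, c). \<Sum>i\<in>I. F i $$ (r, c)) *\<^sub>v v) $ r = vec nr (\<lambda>r. \<Sum>i\<in>I. (F i *\<^sub>v v) $ r) $ r"
    using r by simp
qed simp

lemma scalar_prod_vec_sum:
  assumes u: "u \<in> carrier_vec n" and f: "\<And>i. i \<in> I \<Longrightarrow> f i \<in> carrier_vec n"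
  shows "u \<bullet> vec n (\<lambda>r. \<Sum>i\<in>I. f i $ r) = (\<Sum>i\<in>I. u \<bullet> f i)"
proof -
  have "u \<bullet> vec n (\<lambda>r. \<Sum>i\<in>I. f i $ r) = (\<Sum>i\<in>I. \<Sum>r<n. u $ r * f i $ r)"
    using u by (simp add: scalar_prod_def sum_distrib_left sum.swap[of _ I] lessThan_atLeast0)
  also have "\<dots> = (\<Sum>i\<in>I. u \<bullet> f i)"
  proof (rule sum.cong)
    fix i assume "i \<in> I"
    then have "f i \<in> carrier_vec n" by (rule f)
    then show "(\<Sum>r<n. u $ r * f i $ r) = u \<bullet> f i" by (simp add: scalar_prod_def lessThan_atLeast0)
  qed simp
  finally show ?thesis .
qed

lemma index_ones_vec [simp]: "i < n \<Longrightarrow> ones_vec n $ i = 1" "dim_vec (ones_vec n) = n"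
  by (simp_all add: ones_vec_def)

lemma ones_vec_carrier [simp]: "ones_vec n \<in> carrier_vec n"
  by (simp add: ones_vec_def)

lemma outer_prod_carrier [simp]:
  "t \<in> carrier_vec nr \<Longrightarrow> s \<in> carrier_vec nc \<Longrightarrow> outer_prod t s \<in> carrier_mat nr nc"
  by (simp add: outer_prod_def)

lemma row_outer_prod [simp]: "a < dim_vec t \<Longrightarrow> row (outer_prod t s) a = t $ a \<cdot>\<^sub>v s"
  by (intro eq_vecI) (auto simp: outer_prod_def)

lemma mtrace_mult_transpose:
  fixes X Y P :: "'a::comm_ring_1 mat"
  assumes X: "X \<in> carrier_mat d m" and Y: "Y \<in> carrier_mat d m" and P: "P \<in> carrier_mat m m"
  shows "mtrace (X * P * Y\<^sup>T) = (\<Sum>a<d. row X a \<bullet> (P *\<^sub>v row Y a))"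
proof -
  have "X * P * Y\<^sup>T = X * (P * Y\<^sup>T)" using X P Y by (simp add: assoc_mult_mat[of _ d m _ m _ d])
  then show ?thesis
    unfolding mtrace_def using X P Y by (intro sum.cong) (auto simp: mult_mat_vec_def)
qed

lemma
  fixes A :: "'a::comm_ring_1 mat"
  assumes A: "A \<in> carrier_mat n n" and inv: "invertible_mat A"
  shows minv_carrier_mat: "minv A \<in> carrier_mat n n"
    and mult_minv_mat: "A * minv A = 1\<^sub>m n"
    and minv_mult_mat: "minv A * A = 1\<^sub>m n"
proof -
  obtain C where AC: "A * C = 1\<^sub>m n" and CA: "C * A = 1\<^sub>m (dim_row C)"
    using inv A unfolding invertible_mat_def inverts_mat_def by auto
  have "dim_col C = n" using arg_cong[OF AC, of dim_col] by simp
  moreover have "dim_row C = n" using arg_cong[OF CA, of dim_col] A by simp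
  ultimately have "C \<in> carrier_mat n n" by blast
  then have "\<exists>C. C \<in> carrier_mat (dim_row A) (dim_row A) \<and> inverts_mat A C \<and> inverts_mat C A"
    using A AC CA unfolding inverts_mat_def by auto
  then have "minv A \<in> carrier_mat (dim_row A) (dim_row A) \<and> inverts_mat A (minv A) \<and> inverts_mat (minv A) A"
    unfolding minv_def by (rule someI_ex)
  then show "minv A \<in> carrier_mat n n" "A * minv A = 1\<^sub>m n" "minv A * A = 1\<^sub>m n"
    using A unfolding inverts_mat_def by auto
qed

lemma transpose_minv_symmetric:
  fixes A :: "'a::comm_ring_1 mat"
  assumes A: "A \<in> carrier_mat n n" and inv: "invertible_mat A" and sym: "A\<^sup>T = A"
  shows "(minv A)\<^sup>T = minv A"
proof -
  have Ai: "minv A \<in> carrier_mat n n" using minv_carrier_mat[OF A inv] .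
  have "A * (minv A)\<^sup>T = 1\<^sub>m n"
    using transpose_mult[OF Ai A] minv_mult_mat[OF A inv] sym by simp
  then have "minv A * A * (minv A)\<^sup>T = minv A"
    using Ai A by (simp add: assoc_mult_mat[of _ n n _ n _ n])
  then show ?thesis using minv_mult_mat[OF A inv] Ai by simp
qed

definition translation_invariant :: "nat \<Rightarrow> nat \<Rightarrow> real mat \<Rightarrow> bool" where
  "translation_invariant d m P \<longleftrightarrow> (\<forall>S \<in> carrier_mat d m. \<forall>t \<in> carrier_vec d.
     mtrace ((S + outer_prod t (ones_vec m)) * P * (S + outer_prod t (ones_vec m))\<^sup>T)
     = mtrace (S * P * S\<^sup>T))"

lemma quadratic_form_translate:
  fixes P :: "real mat"
  assumes P: "P \<in> carrier_mat m m" and sym: "P\<^sup>T = P" and ker: "P *\<^sub>v e = 0\<^sub>v m"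
    and s: "s \<in> carrier_vec m" and e: "e \<in> carrier_vec m"
  shows "(s + c \<cdot>\<^sub>v e) \<bullet> (P *\<^sub>v (s + c \<cdot>\<^sub>v e)) = s \<bullet> (P *\<^sub>v s)"
proof -
  have "P *\<^sub>v (s + c \<cdot>\<^sub>v e) = P *\<^sub>v s"
    using P s e ker by (auto simp: mult_add_distrib_mat_vec[of _ m m] mult_mat_vec[of _ m m])
  moreover have "e \<bullet> (P *\<^sub>v s) = 0"
    using transpose_vec_mult_scalar[OF P s e] sym ker s by simp
  ultimately show ?thesis
    using P s e by (simp add: add_scalar_prod_distrib[of _ m])
qed

lemma translation_invariantI:
  assumes P: "P \<in> carrier_mat m m" and sym: "P\<^sup>T = P" and ker: "P *\<^sub>v ones_vec m = 0\<^sub>v m"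
  shows "translation_invariant d m P"
  unfolding translation_invariant_def
proof (intro ballI)
  fix S :: "real mat" and t :: "real vec" assume S: "S \<in> carrier_mat d m" and t: "t \<in> carrier_vec d"
  have "mtrace ((S + outer_prod t (ones_vec m)) * P * (S + outer_prod t (ones_vec m))\<^sup>T)
      = (\<Sum>a<d. (row S a + t $ a \<cdot>\<^sub>v ones_vec m) \<bullet> (P *\<^sub>v (row S a + t $ a \<cdot>\<^sub>v ones_vec m)))"
    using S t P by (simp add: mtrace_mult_transpose[of _ d m])
  also have "\<dots> = (\<Sum>a<d. row S a \<bullet> (P *\<^sub>v row S a))"
    using S by (intro sum.cong refl quadratic_form_translate[OF P sym ker]) simp_all
  also have "\<dots> = mtrace (S * P * S\<^sup>T)"
    by (rule mtrace_mult_transpose[OF S S P, symmetric])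
  finally show "mtrace ((S + outer_prod t (ones_vec m)) * P * (S + outer_prod t (ones_vec m))\<^sup>T)
      = mtrace (S * P * S\<^sup>T)" .
qed

lemma translation_invariantD:
  assumes d: "0 < d" and P: "P \<in> carrier_mat m m" and inv: "translation_invariant d m P"
  shows "ones_vec m \<bullet> (P *\<^sub>v ones_vec m) = 0"
proof -
  let ?o = "ones_vec m :: real vec" and ?S = "0\<^sub>m d m :: real mat" and ?t = "ones_vec d :: real vec"
  have "mtrace ((?S + outer_prod ?t ?o) * P * (?S + outer_prod ?t ?o)\<^sup>T) = mtrace (?S * P * ?S\<^sup>T)"
    using inv zero_carrier_mat ones_vec_carrier unfolding translation_invariant_def by blast
  moreover have "mtrace ((?S + outer_prod ?t ?o) * P * (?S + outer_prod ?t ?o)\<^sup>T) = real d * (?o \<bullet> (P *\<^sub>v ?o))"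
    using P by (simp add: mtrace_mult_transpose[of _ d m])
  moreover have "mtrace (?S * P * ?S\<^sup>T) = 0"
    using P by (simp add: mtrace_def)
  ultimately show ?thesis using d by simp
qed

context
  fixes l m k :: nat and B Z :: "real mat" and \<mu> :: real
  assumes B: "B \<in> carrier_mat l m" and Z: "Z \<in> carrier_mat k l"
begin

lemma Mmat_carrier: "Mmat B Z \<mu> \<in> carrier_mat l l"
  using B Z by (simp add: Mmat_def)

lemma Mmat_transpose: "(Mmat B Z \<mu>)\<^sup>T = Mmat B Z \<mu>"
  using B Z by (simp add: Mmat_def transpose_add[of _ l l] transpose_mult[of _ l m]
      transpose_mult[of _ l k] transpose_smult_mat)

lemma Mmat_mult_vec:
  assumes x: "x \<in> carrier_vec l"
  shows "Mmat B Z \<mu> *\<^sub>v x = B *\<^sub>v (B\<^sup>T *\<^sub>v x) + \<mu> \<cdot>\<^sub>v (Z\<^sup>T *\<^sub>v (Z *\<^sub>v x))"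
  using B Z x by (simp add: Mmat_def add_mult_distrib_mat_vec[of _ l l] smult_mat_mult_vec[of _ l l])

context
  assumes inv: "invertible_mat (Mmat B Z \<mu>)"
begin

lemma Qmat_carrier: "Qmat B Z \<mu> \<in> carrier_mat m m"
  using minv_carrier_mat[OF Mmat_carrier inv] B by (simp add: Qmat_def)

lemma Qmat_transpose: "(Qmat B Z \<mu>)\<^sup>T = Qmat B Z \<mu>"
proof -
  let ?Mi = "minv (Mmat B Z \<mu>)"
  have Mi: "?Mi \<in> carrier_mat l l" using minv_carrier_mat[OF Mmat_carrier inv] .
  have "(Qmat B Z \<mu>)\<^sup>T = (?Mi * B)\<^sup>T * B"
    using B Mi transpose_mult[OF _ mult_carrier_mat[OF Mi B], of "B\<^sup>T" m]
    by (simp add: Qmat_def assoc_mult_mat[of _ m l _ l _ m])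
  also have "\<dots> = B\<^sup>T * ?Mi\<^sup>T * B"
    using B Mi by (simp add: transpose_mult[of _ l l])
  finally show ?thesis
    using transpose_minv_symmetric[OF Mmat_carrier inv Mmat_transpose] by (simp add: Qmat_def)
qed

lemma Qmat_mult_vec:
  assumes v: "v \<in> carrier_vec m"
  shows "Qmat B Z \<mu> *\<^sub>v v = B\<^sup>T *\<^sub>v (minv (Mmat B Z \<mu>) *\<^sub>v (B *\<^sub>v v))"
  using minv_carrier_mat[OF Mmat_carrier inv] B v
  by (simp add: Qmat_def assoc_mult_mat_vec[of _ m l _ m])

lemma Mmat_mult_minv_vec:
  assumes u: "u \<in> carrier_vec l"
  shows "Mmat B Z \<mu> *\<^sub>v (minv (Mmat B Z \<mu>) *\<^sub>v u) = u"
  using minv_carrier_mat[OF Mmat_carrier inv] mult_minv_mat[OF Mmat_carrier inv] Mmat_carrier u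
  by (simp add: assoc_mult_mat_vec[of _ l l _ l, symmetric])

lemma Qmat_defect:
  assumes v: "v \<in> carrier_vec m"
  defines "w \<equiv> minv (Mmat B Z \<mu>) *\<^sub>v (B *\<^sub>v v)"
  shows "v \<bullet> v - v \<bullet> (Qmat B Z \<mu> *\<^sub>v v)
    = (v - B\<^sup>T *\<^sub>v w) \<bullet> (v - B\<^sup>T *\<^sub>v w) + \<mu> * ((Z *\<^sub>v w) \<bullet> (Z *\<^sub>v w))"
proof -
  define y where "y = B\<^sup>T *\<^sub>v w"
  define z where "z = Z *\<^sub>v w"
  have w: "w \<in> carrier_vec l" using minv_carrier_mat[OF Mmat_carrier inv] B v by (simp add: w_def)
  have y: "y \<in> carrier_vec m" and z: "z \<in> carrier_vec k" using B Z w by (simp_all add: y_def z_def)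
  have "v \<bullet> y = w \<bullet> (B *\<^sub>v v)"
    using transpose_vec_mult_scalar[OF B v w] comm_scalar_prod[OF v y] by (simp add: y_def)
  also have "B *\<^sub>v v = B *\<^sub>v y + \<mu> \<cdot>\<^sub>v (Z\<^sup>T *\<^sub>v z)"
    using Mmat_mult_minv_vec[of "B *\<^sub>v v"] Mmat_mult_vec[OF w] B v by (simp add: w_def y_def z_def)
  also have "w \<bullet> \<dots> = w \<bullet> (B *\<^sub>v y) + \<mu> * (w \<bullet> (Z\<^sup>T *\<^sub>v z))"
    using B Z w y z by (simp add: scalar_prod_add_distrib[of _ l])
  also have "\<dots> = y \<bullet> y + \<mu> * (z \<bullet> z)"
    using transpose_vec_mult_scalar[OF B y w] transpose_vec_mult_scalar[of "Z\<^sup>T" l k z w] Z w z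
    by (simp add: y_def z_def)
  finally have "v \<bullet> y = y \<bullet> y + \<mu> * (z \<bullet> z)" .
  then show ?thesis
    using scalar_prod_diff_self[OF v y] Qmat_mult_vec[OF v] by (simp add: w_def y_def z_def)
qed

context
  assumes \<mu>: "0 \<le> \<mu>"
begin

lemma Qmat_quadratic_le:
  assumes v: "v \<in> carrier_vec m"
  shows "v \<bullet> (Qmat B Z \<mu> *\<^sub>v v) \<le> v \<bullet> v"
proof -
  let ?w = "minv (Mmat B Z \<mu>) *\<^sub>v (B *\<^sub>v v)"
  have "0 \<le> \<mu> * ((Z *\<^sub>v ?w) \<bullet> (Z *\<^sub>v ?w))"
    using \<mu> scalar_prod_self_nonneg by simp
  then show ?thesis
    using Qmat_defect[OF v] scalar_prod_self_nonneg[of "v - B\<^sup>T *\<^sub>v ?w"] by linarith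
qed

lemma Qmat_fixes_iff_quadratic:
  assumes v: "v \<in> carrier_vec m"
  shows "Qmat B Z \<mu> *\<^sub>v v = v \<longleftrightarrow> v \<bullet> (Qmat B Z \<mu> *\<^sub>v v) = v \<bullet> v"
proof
  let ?w = "minv (Mmat B Z \<mu>) *\<^sub>v (B *\<^sub>v v)"
  assume "v \<bullet> (Qmat B Z \<mu> *\<^sub>v v) = v \<bullet> v"
  moreover have "0 \<le> \<mu> * ((Z *\<^sub>v ?w) \<bullet> (Z *\<^sub>v ?w))"
    using \<mu> scalar_prod_self_nonneg by simp
  ultimately have "(v - B\<^sup>T *\<^sub>v ?w) \<bullet> (v - B\<^sup>T *\<^sub>v ?w) = 0"
    using Qmat_defect[OF v] scalar_prod_self_nonneg[of "v - B\<^sup>T *\<^sub>v ?w"] by linarith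
  moreover have "B\<^sup>T *\<^sub>v ?w \<in> carrier_vec m"
    using minv_carrier_mat[OF Mmat_carrier inv] B v by simp
  ultimately have "v - B\<^sup>T *\<^sub>v ?w = 0\<^sub>v m"
    using scalar_prod_self_eq_0_iff[of "v - B\<^sup>T *\<^sub>v ?w" m] v by simp
  then show "Qmat B Z \<mu> *\<^sub>v v = v"
    using diff_eq_0_vec_iff[OF v \<open>B\<^sup>T *\<^sub>v ?w \<in> carrier_vec m\<close>] Qmat_mult_vec[OF v] by simp
qed simp

lemma Qmat_fixes_iff_preimage:
  assumes v: "v \<in> carrier_vec m"
  shows "Qmat B Z \<mu> *\<^sub>v v = v
    \<longleftrightarrow> (\<exists>x \<in> carrier_vec l. B\<^sup>T *\<^sub>v x = v \<and> (0 < \<mu> \<longrightarrow> Z *\<^sub>v x = 0\<^sub>v k))"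
proof
  let ?w = "minv (Mmat B Z \<mu>) *\<^sub>v (B *\<^sub>v v)"
  have w: "?w \<in> carrier_vec l" using minv_carrier_mat[OF Mmat_carrier inv] B v by simp
  assume fixed: "Qmat B Z \<mu> *\<^sub>v v = v"
  then have Bw: "B\<^sup>T *\<^sub>v ?w = v" using Qmat_mult_vec[OF v] by simp
  have "0 < \<mu> \<longrightarrow> Z *\<^sub>v ?w = 0\<^sub>v k"
  proof
    assume "0 < \<mu>"
    moreover have "\<mu> * ((Z *\<^sub>v ?w) \<bullet> (Z *\<^sub>v ?w)) = 0"
      using Qmat_defect[OF v] fixed Bw v by simp
    ultimately show "Z *\<^sub>v ?w = 0\<^sub>v k"
      using scalar_prod_self_eq_0_iff[of "Z *\<^sub>v ?w" k] Z w by simp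
  qed
  then show "\<exists>x \<in> carrier_vec l. B\<^sup>T *\<^sub>v x = v \<and> (0 < \<mu> \<longrightarrow> Z *\<^sub>v x = 0\<^sub>v k)"
    using w Bw by blast
next
  assume "\<exists>x \<in> carrier_vec l. B\<^sup>T *\<^sub>v x = v \<and> (0 < \<mu> \<longrightarrow> Z *\<^sub>v x = 0\<^sub>v k)"
  then obtain x where x: "x \<in> carrier_vec l" and Bx: "B\<^sup>T *\<^sub>v x = v"
    and Zx: "0 < \<mu> \<longrightarrow> Z *\<^sub>v x = 0\<^sub>v k" by blast
  have "\<mu> \<cdot>\<^sub>v (Z\<^sup>T *\<^sub>v (Z *\<^sub>v x)) = 0\<^sub>v l"
    using Zx \<mu> Z x by (cases "\<mu> = 0") auto
  then have "Mmat B Z \<mu> *\<^sub>v x = B *\<^sub>v v"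
    using Mmat_mult_vec[OF x] Bx B v by simp
  then have "minv (Mmat B Z \<mu>) *\<^sub>v (B *\<^sub>v v) = (minv (Mmat B Z \<mu>) * Mmat B Z \<mu>) *\<^sub>v x"
    using minv_carrier_mat[OF Mmat_carrier inv] Mmat_carrier x by simp
  then have "minv (Mmat B Z \<mu>) *\<^sub>v (B *\<^sub>v v) = x"
    using minv_mult_mat[OF Mmat_carrier inv] x by simp
  then show "Qmat B Z \<mu> *\<^sub>v v = v" using Qmat_mult_vec[OF v] Bx by simp
qed

end

end

end

lemma QII_carrier [simp]: "QII n m B Z \<mu> \<in> carrier_mat m m"
  by (simp add: QII_def)

lemma PII_carrier [simp]: "PII n m B Z \<mu> \<in> carrier_mat m m"
  by (simp add: PII_def)

locale block_family =
  fixes n m :: nat and l k :: "nat \<Rightarrow> nat"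
    and B Z :: "nat \<Rightarrow> real mat" and \<mu> :: "nat \<Rightarrow> real"
  assumes B: "\<And>i. i \<in> {1..n} \<Longrightarrow> B i \<in> carrier_mat (l i) m"
    and Z: "\<And>i. i \<in> {1..n} \<Longrightarrow> Z i \<in> carrier_mat (k i) (l i)"
    and \<mu>: "\<And>i. i \<in> {1..n} \<Longrightarrow> 0 \<le> \<mu> i"
    and inv: "\<And>i. i \<in> {1..n} \<Longrightarrow> invertible_mat (Mmat (B i) (Z i) (\<mu> i))"
begin

lemma Qmat_family_carrier: "i \<in> {1..n} \<Longrightarrow> Qmat (B i) (Z i) (\<mu> i) \<in> carrier_mat m m"
  by (rule Qmat_carrier[OF B Z inv])

lemma QII_transpose: "(QII n m B Z \<mu>)\<^sup>T = QII n m B Z \<mu>"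
proof (rule eq_matI)
  fix r c assume "r < dim_row (QII n m B Z \<mu>)" and "c < dim_col (QII n m B Z \<mu>)"
  then have rc: "r < m" "c < m" by (simp_all add: QII_def)
  have "Qmat (B i) (Z i) (\<mu> i) $$ (c, r) = Qmat (B i) (Z i) (\<mu> i) $$ (r, c)" if "i \<in> {1..n}" for i
    using Qmat_family_carrier[OF that] rc
      arg_cong[OF Qmat_transpose[OF B[OF that] Z[OF that] inv[OF that]], of "\<lambda>A. A $$ (r, c)"]
    by simp
  then show "(QII n m B Z \<mu>)\<^sup>T $$ (r, c) = QII n m B Z \<mu> $$ (r, c)"
    using rc by (simp add: QII_def)
qed (simp_all add: QII_def)

lemma PII_eq: "PII n m B Z \<mu> = real n \<cdot>\<^sub>m 1\<^sub>m m - QII n m B Z \<mu>"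
proof (rule eq_matI)
  fix r c assume rc: "r < dim_row (real n \<cdot>\<^sub>m 1\<^sub>m m - QII n m B Z \<mu>)"
    "c < dim_col (real n \<cdot>\<^sub>m 1\<^sub>m m - QII n m B Z \<mu>)"
  then have "(\<Sum>i=1..n. (1\<^sub>m m - Qmat (B i) (Z i) (\<mu> i)) $$ (r, c))
      = (\<Sum>i=1..n. (if r = c then 1 else 0) - Qmat (B i) (Z i) (\<mu> i) $$ (r, c))"
  proof (intro sum.cong refl)
    fix i assume "i \<in> {1..n}"
    then have "Qmat (B i) (Z i) (\<mu> i) \<in> carrier_mat m m" by (rule Qmat_family_carrier)
    then show "(1\<^sub>m m - Qmat (B i) (Z i) (\<mu> i)) $$ (r, c)
        = (if r = c then 1 else 0) - Qmat (B i) (Z i) (\<mu> i) $$ (r, c)"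
      using rc by (simp add: QII_def)
  qed
  then show "PII n m B Z \<mu> $$ (r, c) = (real n \<cdot>\<^sub>m 1\<^sub>m m - QII n m B Z \<mu>) $$ (r, c)"
    using rc by (simp add: PII_def QII_def sum_subtractf)
qed (simp_all add: PII_def QII_def)

lemma PII_transpose: "(PII n m B Z \<mu>)\<^sup>T = PII n m B Z \<mu>"
  using QII_transpose by (simp add: PII_eq transpose_minus[of _ m m] transpose_smult_mat)

lemma QII_mult_vec:
  assumes v: "v \<in> carrier_vec m"
  shows "QII n m B Z \<mu> *\<^sub>v v = vec m (\<lambda>r. \<Sum>i=1..n. (Qmat (B i) (Z i) (\<mu> i) *\<^sub>v v) $ r)"
  unfolding QII_def using mat_sum_mult_vec[OF Qmat_family_carrier v] .

lemma PII_mult_vec: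
  assumes v: "v \<in> carrier_vec m"
  shows "PII n m B Z \<mu> *\<^sub>v v = real n \<cdot>\<^sub>v v - QII n m B Z \<mu> *\<^sub>v v"
  using v QII_carrier
  by (simp add: PII_eq minus_mult_distrib_mat_vec[of _ m m] smult_mat_mult_vec[of _ m m])

lemma QII_fixes_all_iff_quadratic:
  assumes v: "v \<in> carrier_vec m"
  shows "(\<forall>i\<in>{1..n}. Qmat (B i) (Z i) (\<mu> i) *\<^sub>v v = v) \<longleftrightarrow> v \<bullet> (QII n m B Z \<mu> *\<^sub>v v) = real n * (v \<bullet> v)"
proof -
  let ?d = "\<lambda>i. v \<bullet> v - v \<bullet> (Qmat (B i) (Z i) (\<mu> i) *\<^sub>v v)"
  have Qv: "Qmat (B i) (Z i) (\<mu> i) *\<^sub>v v \<in> carrier_vec m" if "i \<in> {1..n}" for i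
    using Qmat_family_carrier[OF that] v by simp
  have "v \<bullet> (QII n m B Z \<mu> *\<^sub>v v) = (\<Sum>i=1..n. v \<bullet> (Qmat (B i) (Z i) (\<mu> i) *\<^sub>v v))"
    using scalar_prod_vec_sum[where I = "{1..n}" and f = "\<lambda>i. Qmat (B i) (Z i) (\<mu> i) *\<^sub>v v", OF v Qv] v
    by (simp add: QII_mult_vec)
  then have defect_sum: "real n * (v \<bullet> v) - v \<bullet> (QII n m B Z \<mu> *\<^sub>v v) = (\<Sum>i=1..n. ?d i)"
    by (simp add: sum_subtractf)
  have "(\<forall>i\<in>{1..n}. Qmat (B i) (Z i) (\<mu> i) *\<^sub>v v = v) \<longleftrightarrow> (\<forall>i\<in>{1..n}. ?d i = 0)"
    using Qmat_fixes_iff_quadratic[OF B Z inv \<mu> v] by (simp add: eq_commute[of "v \<bullet> v"])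
  also have "\<dots> \<longleftrightarrow> (\<Sum>i=1..n. ?d i) = 0"
    using Qmat_quadratic_le[OF B Z inv \<mu> v] by (intro sum_nonneg_eq_0_iff[symmetric]) auto
  also have "\<dots> \<longleftrightarrow> v \<bullet> (QII n m B Z \<mu> *\<^sub>v v) = real n * (v \<bullet> v)"
    unfolding defect_sum[symmetric] by linarith
  finally show ?thesis .
qed

lemma QII_fixes_all_iff:
  assumes v: "v \<in> carrier_vec m"
  shows "(\<forall>i\<in>{1..n}. Qmat (B i) (Z i) (\<mu> i) *\<^sub>v v = v) \<longleftrightarrow> QII n m B Z \<mu> *\<^sub>v v = real n \<cdot>\<^sub>v v"
proof
  assume "\<forall>i\<in>{1..n}. Qmat (B i) (Z i) (\<mu> i) *\<^sub>v v = v"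
  then show "QII n m B Z \<mu> *\<^sub>v v = real n \<cdot>\<^sub>v v"
    using v by (intro eq_vecI) (simp_all add: QII_mult_vec)
next
  assume "QII n m B Z \<mu> *\<^sub>v v = real n \<cdot>\<^sub>v v"
  then show "\<forall>i\<in>{1..n}. Qmat (B i) (Z i) (\<mu> i) *\<^sub>v v = v"
    using QII_fixes_all_iff_quadratic[OF v] v by simp
qed


lemma PII_mult_vec_eq_0_iff:
  assumes v: "v \<in> carrier_vec m"
  shows "PII n m B Z \<mu> *\<^sub>v v = 0\<^sub>v m \<longleftrightarrow> QII n m B Z \<mu> *\<^sub>v v = real n \<cdot>\<^sub>v v"
proof -
  have "QII n m B Z \<mu> *\<^sub>v v \<in> carrier_vec m" using QII_carrier v by (rule mult_mat_vec_carrier)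
  then show ?thesis
    using PII_mult_vec[OF v] diff_eq_0_vec_iff[of "real n \<cdot>\<^sub>v v" m] v by auto
qed

lemma PII_quadratic_eq_0_iff:
  assumes v: "v \<in> carrier_vec m"
  shows "v \<bullet> (PII n m B Z \<mu> *\<^sub>v v) = 0 \<longleftrightarrow> (\<forall>i\<in>{1..n}. Qmat (B i) (Z i) (\<mu> i) *\<^sub>v v = v)"
proof -
  have "QII n m B Z \<mu> *\<^sub>v v \<in> carrier_vec m" using QII_carrier v by (rule mult_mat_vec_carrier)
  then have "v \<bullet> (PII n m B Z \<mu> *\<^sub>v v) = real n * (v \<bullet> v) - v \<bullet> (QII n m B Z \<mu> *\<^sub>v v)"
    using PII_mult_vec[OF v] v by (simp add: scalar_prod_minus_distrib[of _ m])
  then show ?thesis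
    using QII_fixes_all_iff_quadratic[OF v] by auto
qed

lemma translation_invariant_PII_iff:
  assumes "0 < d"
  shows "translation_invariant d m (PII n m B Z \<mu>)
    \<longleftrightarrow> (\<forall>i\<in>{1..n}. Qmat (B i) (Z i) (\<mu> i) *\<^sub>v ones_vec m = ones_vec m)"
proof
  assume "translation_invariant d m (PII n m B Z \<mu>)"
  then have "ones_vec m \<bullet> (PII n m B Z \<mu> *\<^sub>v ones_vec m) = 0"
    by (rule translation_invariantD[OF assms PII_carrier])
  then show "\<forall>i\<in>{1..n}. Qmat (B i) (Z i) (\<mu> i) *\<^sub>v ones_vec m = ones_vec m"
    using PII_quadratic_eq_0_iff[OF ones_vec_carrier] by blast
next
  assume "\<forall>i\<in>{1..n}. Qmat (B i) (Z i) (\<mu> i) *\<^sub>v ones_vec m = ones_vec m"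
  then have "PII n m B Z \<mu> *\<^sub>v ones_vec m = 0\<^sub>v m"
    using QII_fixes_all_iff[OF ones_vec_carrier] PII_mult_vec_eq_0_iff[OF ones_vec_carrier] by blast
  then show "translation_invariant d m (PII n m B Z \<mu>)"
    by (rule translation_invariantI[OF PII_carrier PII_transpose])
qed

lemma Qmat_family_fixes_iff_preimage:
  assumes v: "v \<in> carrier_vec m"
  shows "(\<forall>i\<in>{1..n}. Qmat (B i) (Z i) (\<mu> i) *\<^sub>v v = v)
    \<longleftrightarrow> (\<forall>i\<in>{1..n}. \<exists>x \<in> carrier_vec (l i). (B i)\<^sup>T *\<^sub>v x = v \<and> (\<mu> i > 0 \<longrightarrow> Z i *\<^sub>v x = 0\<^sub>v (k i)))"
proof (rule ball_cong[OF refl])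
  fix i assume "i \<in> {1..n}"
  then show "Qmat (B i) (Z i) (\<mu> i) *\<^sub>v v = v
      \<longleftrightarrow> (\<exists>x \<in> carrier_vec (l i). (B i)\<^sup>T *\<^sub>v x = v \<and> (\<mu> i > 0 \<longrightarrow> Z i *\<^sub>v x = 0\<^sub>v (k i)))"
    using Qmat_fixes_iff_preimage[OF B Z inv \<mu> v] by blast
qed

end

theorem theorem2:
  fixes n m d :: nat and l k :: "nat \<Rightarrow> nat"
    and B Z :: "nat \<Rightarrow> real mat" and \<mu> :: "nat \<Rightarrow> real"
  assumes "n \<ge> 1" and "m \<ge> 1" and "d \<ge> 1"
    and "\<And>i. i \<in> {1..n} \<Longrightarrow> B i \<in> carrier_mat (l i) m"
    and "\<And>i. i \<in> {1..n} \<Longrightarrow> Z i \<in> carrier_mat (k i) (l i)"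
    and "\<And>i. i \<in> {1..n} \<Longrightarrow> \<mu> i \<ge> 0"
    and "\<And>i. i \<in> {1..n} \<Longrightarrow> invertible_mat (Mmat (B i) (Z i) (\<mu> i))"
  shows
   "(PII n m B Z \<mu> *\<^sub>v ones_vec m = 0\<^sub>v m
      \<longleftrightarrow> QII n m B Z \<mu> *\<^sub>v ones_vec m = real n \<cdot>\<^sub>v ones_vec m)
    \<and> (QII n m B Z \<mu> *\<^sub>v ones_vec m = real n \<cdot>\<^sub>v ones_vec m
      \<longleftrightarrow> (\<forall>i\<in>{1..n}. Qmat (B i) (Z i) (\<mu> i) *\<^sub>v ones_vec m = ones_vec m))
    \<and> ((\<forall>i\<in>{1..n}. Qmat (B i) (Z i) (\<mu> i) *\<^sub>v ones_vec m = ones_vec m)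
      \<longleftrightarrow> (\<forall>S \<in> carrier_mat d m. \<forall>t \<in> carrier_vec d.
            mtrace ((S + outer_prod t (ones_vec m)) * PII n m B Z \<mu> * (S + outer_prod t (ones_vec m))\<^sup>T)
            = mtrace (S * PII n m B Z \<mu> * S\<^sup>T)))
    \<and> ((\<forall>S \<in> carrier_mat d m. \<forall>t \<in> carrier_vec d.
            mtrace ((S + outer_prod t (ones_vec m)) * PII n m B Z \<mu> * (S + outer_prod t (ones_vec m))\<^sup>T)
            = mtrace (S * PII n m B Z \<mu> * S\<^sup>T))
      \<longleftrightarrow> (\<forall>i\<in>{1..n}. \<exists>x \<in> carrier_vec (l i).
            (B i)\<^sup>T *\<^sub>v x = ones_vec m \<and> (\<mu> i > 0 \<longrightarrow> Z i *\<^sub>v x = 0\<^sub>v (k i))))"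
proof -
  interpret block_family n m l k B Z \<mu> by unfold_locales (fact assms)+
  have "0 < d" using assms(3) by simp
  show ?thesis
    unfolding translation_invariant_def[symmetric]
    by (simp only: PII_mult_vec_eq_0_iff[OF ones_vec_carrier] QII_fixes_all_iff[OF ones_vec_carrier, symmetric]
        translation_invariant_PII_iff[OF \<open>0 < d\<close>] Qmat_family_fixes_iff_preimage[OF ones_vec_carrier])
qed

end
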